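(* Let $\Gamma_3^*\subseteq\mathbb{R}^7$ be the set of entropy vectors of triples of discrete random variables. Let $\mathbf{e}_1=[1,0,0,1,1,0,1]^\intercal$, $\mathbf{e}_2=[0,1,0,1,0,1,1]^\intercal$, $\mathbf{e}_3=[0,0,1,0,1,1,1]^\intercal$, $\mathbf{e}_{123'}=[1,1,1,2,2,2,2]^\intercal$, and $\Theta=\mathrm{cone}(\mathbf{e}_1,\mathbf{e}_2,\mathbf{e}_3,\mathbf{e}_{123'})$. Let $\Theta^{\mathrm{in}}$ be the set of all vectors $\lambda_1\mathbf{e}_1+\lambda_2\mathbf{e}_2+\lambda_3\mathbf{e}_3+\lambda_{123'}\mathbf{e}_{123'}$ with $\lambda_1,\lambda_2,\lambda_3\ge 0$ and $\lambda_{123'}=\log m$ for some $m\in\mathbb{N}$. Then $\Theta^{\mathrm{in}}\subseteq\Theta\cap\Gamma_3^*$.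
   Context: All logarithms are base 2 and entropies are in bits. For a discrete random vector $(X_1,X_2,X_3)$, its entropy vector is $[h_1,h_2,h_3,h_{12},h_{13},h_{23},h_{123}]^\intercal\in\mathbb{R}^7$, where $h_\alpha$ is the Shannon entropy of $(X_i)_{i\in\alpha}$. *)

theory Defs
  imports "HOL-Analysis.Analysis" "HOL-Probability.Probability"
begin

(* Shannon entropy (bits) of a discrete distribution on a countable type;
   log 2 0 = 0 in Isabelle, so zero-probability points contribute 0. *)
definition entropy_terms :: "'a pmf \<Rightarrow> 'a \<Rightarrow> real" where
  "entropy_terms p = (\<lambda>x. - pmf p x * log 2 (pmf p x))"

definition finite_entropy :: "'a pmf \<Rightarrow> bool" where
  "finite_entropy p \<longleftrightarrow> entropy_terms p summable_on UNIV"

definition shannon_entropy :: "'a pmf \<Rightarrow> real" where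
  "shannon_entropy p = infsum (entropy_terms p) UNIV"

definition entropy_vector :: "(nat \<times> nat \<times> nat) pmf \<Rightarrow> real ^ 7" where
  "entropy_vector p = vector
     [shannon_entropy (map_pmf (\<lambda>(x,y,z). x) p),
      shannon_entropy (map_pmf (\<lambda>(x,y,z). y) p),
      shannon_entropy (map_pmf (\<lambda>(x,y,z). z) p),
      shannon_entropy (map_pmf (\<lambda>(x,y,z). (x,y)) p),
      shannon_entropy (map_pmf (\<lambda>(x,y,z). (x,z)) p),
      shannon_entropy (map_pmf (\<lambda>(x,y,z). (y,z)) p),
      shannon_entropy p]"

definition all_finite_entropy :: "(nat \<times> nat \<times> nat) pmf \<Rightarrow> bool" where
  "all_finite_entropy p \<longleftrightarrow>
     finite_entropy (map_pmf (\<lambda>(x,y,z). x) p) \<and>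
     finite_entropy (map_pmf (\<lambda>(x,y,z). y) p) \<and>
     finite_entropy (map_pmf (\<lambda>(x,y,z). z) p) \<and>
     finite_entropy (map_pmf (\<lambda>(x,y,z). (x,y)) p) \<and>
     finite_entropy (map_pmf (\<lambda>(x,y,z). (x,z)) p) \<and>
     finite_entropy (map_pmf (\<lambda>(x,y,z). (y,z)) p) \<and>
     finite_entropy p"

(* Gamma_3^*: entropy vectors of triples of discrete random variables
   (countable alphabets, encoded injectively into nat) *)
definition Gamma3_star :: "(real ^ 7) set" where
  "Gamma3_star = {entropy_vector p | p. all_finite_entropy p}"

definition e1 :: "real ^ 7" where "e1 = vector [1,0,0,1,1,0,1]"
definition e2 :: "real ^ 7" where "e2 = vector [0,1,0,1,0,1,1]"
definition e3 :: "real ^ 7" where "e3 = vector [0,0,1,0,1,1,1]"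
definition e123' :: "real ^ 7" where "e123' = vector [1,1,1,2,2,2,2]"

definition Theta :: "(real ^ 7) set" where
  "Theta = {l1 *\<^sub>R e1 + l2 *\<^sub>R e2 + l3 *\<^sub>R e3 + l4 *\<^sub>R e123' | l1 l2 l3 l4.
              l1 \<ge> 0 \<and> l2 \<ge> 0 \<and> l3 \<ge> 0 \<and> l4 \<ge> 0}"

definition Theta_in :: "(real ^ 7) set" where
  "Theta_in = {l1 *\<^sub>R e1 + l2 *\<^sub>R e2 + l3 *\<^sub>R e3 + log 2 (real m) *\<^sub>R e123' | l1 l2 l3 m.
              l1 \<ge> 0 \<and> l2 \<ge> 0 \<and> l3 \<ge> 0 \<and> (m::nat) \<ge> 1}"

end

theory Submission
  imports Defs "HOL-Real_Asymp.Real_Asymp"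
begin

(*
  The entropy vector of the componentwise independent coupling of two random triples is the
  sum of their entropy vectors, so it suffices to realise each generator separately.
  l e_i is realised by a single variable of entropy l in coordinate i; every l >= 0 is such an
  entropy, namely that of a Bernoulli variable (for the fractional part) paired with a uniform
  variable on 2^k points. (log m) e_123' is realised by (U, V, U + V mod m) with U, V independent
  and uniform on {0..m-1}: each coordinate is uniform and any two determine the third.
*)

lemma shannon_entropy_eq_sum:
  assumes "finite S" "set_pmf p \<subseteq> S"
  shows "shannon_entropy p = (\<Sum>x\<in>S. entropy_terms p x)"
proof -
  have "infsum (entropy_terms p) UNIV = infsum (entropy_terms p) S"
    by (rule infsum_cong_neutral) (use assms in \<open>auto simp: entropy_terms_def set_pmf_iff\<close>)
  with assms show ?thesis
    by (simp add: shannon_entropy_def)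
qed

lemma finite_entropy_if_finite_support:
  "finite (set_pmf p) \<Longrightarrow> finite_entropy p"
  unfolding finite_entropy_def
  by (rule finite_nonzero_values_imp_summable_on)
     (auto intro: finite_subset[of _ "set_pmf p"] simp: entropy_terms_def set_pmf_iff)

lemma all_finite_entropy_if_finite_support:
  "finite (set_pmf p) \<Longrightarrow> all_finite_entropy p"
  by (simp add: all_finite_entropy_def finite_entropy_if_finite_support)

lemma shannon_entropy_return_pmf [simp]: "shannon_entropy (return_pmf x) = 0"
  by (subst shannon_entropy_eq_sum[of "{x}"]) (auto simp: entropy_terms_def)

lemma shannon_entropy_map_pmf_inj_on:
  assumes "inj_on f (set_pmf p)" "finite (set_pmf p)"
  shows "shannon_entropy (map_pmf f p) = shannon_entropy p"
proof -
  have "shannon_entropy (map_pmf f p) = (\<Sum>y\<in>f ` set_pmf p. entropy_terms (map_pmf f p) y)"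
    using assms by (intro shannon_entropy_eq_sum) auto
  also have "\<dots> = (\<Sum>x\<in>set_pmf p. entropy_terms p x)"
    using assms by (simp add: sum.reindex entropy_terms_def pmf_map_inj)
  also have "\<dots> = shannon_entropy p"
    using assms by (intro shannon_entropy_eq_sum[symmetric]) auto
  finally show ?thesis .
qed

lemma shannon_entropy_pair_pmf:
  assumes "finite (set_pmf p)" "finite (set_pmf q)"
  shows "shannon_entropy (pair_pmf p q) = shannon_entropy p + shannon_entropy q"
proof -
  let ?A = "set_pmf p" and ?B = "set_pmf q"
  have split_term: "entropy_terms (pair_pmf p q) (a, b) =
      entropy_terms p a * pmf q b + pmf p a * entropy_terms q b" if "a \<in> ?A" "b \<in> ?B" for a b
    using that by (simp add: entropy_terms_def pmf_pair log_mult set_pmf_iff less_le algebra_simps)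
  have "shannon_entropy (pair_pmf p q) = (\<Sum>a\<in>?A. \<Sum>b\<in>?B. entropy_terms (pair_pmf p q) (a, b))"
    using assms by (simp add: shannon_entropy_eq_sum[of "?A \<times> ?B"] sum.cartesian_product)
  also have "\<dots> = (\<Sum>a\<in>?A. entropy_terms p a * (\<Sum>b\<in>?B. pmf q b) + pmf p a * (\<Sum>b\<in>?B. entropy_terms q b))"
    by (simp add: split_term sum.distrib sum_distrib_left)
  also have "\<dots> = (\<Sum>a\<in>?A. entropy_terms p a) + (\<Sum>a\<in>?A. pmf p a) * (\<Sum>b\<in>?B. entropy_terms q b)"
    using assms by (simp add: sum_pmf_eq_1 sum.distrib sum_distrib_right[symmetric])
  also have "\<dots> = shannon_entropy p + shannon_entropy q"
    using assms by (simp add: sum_pmf_eq_1 shannon_entropy_eq_sum)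
  finally show ?thesis .
qed

lemma shannon_entropy_pmf_of_set:
  assumes "finite S" "S \<noteq> {}"
  shows "shannon_entropy (pmf_of_set S) = log 2 (card S)"
proof -
  have "shannon_entropy (pmf_of_set S) = (\<Sum>x\<in>S. - (1 / card S) * log 2 (1 / card S))"
    using assms by (simp add: shannon_entropy_eq_sum[of S] entropy_terms_def)
  also have "\<dots> = log 2 (card S)"
    using assms by (simp add: log_divide card_gt_0_iff)
  finally show ?thesis .
qed

lemma shannon_entropy_map_pair_pmf:
  assumes "inj f" "finite (set_pmf p)" "finite (set_pmf q)"
  shows "shannon_entropy (map_pmf (\<lambda>(a, b). f (g a, h b)) (pair_pmf p q)) =
    shannon_entropy (map_pmf g p) + shannon_entropy (map_pmf h q)"
proof -
  have "map_pmf (\<lambda>(a, b). f (g a, h b)) (pair_pmf p q) = map_pmf f (pair_pmf (map_pmf g p) (map_pmf h q))"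
    by (simp add: map_pair[symmetric] map_pmf_comp split_def)
  with assms show ?thesis
    by (simp add: shannon_entropy_map_pmf_inj_on inj_on_subset shannon_entropy_pair_pmf)
qed

definition binary_entropy :: "real \<Rightarrow> real" where
  "binary_entropy t = - t * log 2 t - (1 - t) * log 2 (1 - t)"

lemma shannon_entropy_bernoulli_pmf:
  "0 \<le> t \<Longrightarrow> t \<le> 1 \<Longrightarrow> shannon_entropy (bernoulli_pmf t) = binary_entropy t"
  by (subst shannon_entropy_eq_sum[of UNIV]) (auto simp: UNIV_bool entropy_terms_def binary_entropy_def)

lemma binary_entropy_attains:
  assumes "0 \<le> c" "c \<le> 1"
  obtains t where "0 \<le> t" "t \<le> 1" "binary_entropy t = c"
proof -
  have "continuous_on {0..1/2} binary_entropy"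
  proof (rule continuous_on_IccI)
    show "(binary_entropy \<longlongrightarrow> binary_entropy 0) (at_right 0)"
      unfolding binary_entropy_def log_def by real_asymp
    show "(binary_entropy \<longlongrightarrow> binary_entropy (1/2)) (at_left (1/2))"
      unfolding binary_entropy_def by (intro tendsto_intros) auto
    show "binary_entropy \<midarrow>x\<rightarrow> binary_entropy x" if "0 < x" "x < 1/2" for x
      using that unfolding binary_entropy_def by (intro tendsto_intros) auto
  qed simp
  moreover have "binary_entropy 0 = 0" "binary_entropy (1/2) = 1"
    by (simp_all add: binary_entropy_def log_divide)
  ultimately obtain t where "0 \<le> t" "t \<le> 1/2" "binary_entropy t = c"
    using IVT'[of binary_entropy 0 c "1/2"] assms by auto
  then show ?thesis
    using that by simp
qed

lemma shannon_entropy_attains: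
  assumes "0 \<le> l"
  obtains p :: "nat pmf" where "finite (set_pmf p)" "shannon_entropy p = l"
proof -
  define k where "k = nat \<lfloor>l\<rfloor>"
  have frac: "0 \<le> l - k" "l - k \<le> 1"
    using assms by (simp_all add: k_def) linarith
  obtain t where t: "0 \<le> t" "t \<le> 1" "binary_entropy t = l - k"
    using binary_entropy_attains[OF frac] .
  define U where "U = pmf_of_set {..<2 ^ k :: nat}"
  have U: "finite (set_pmf U)" "shannon_entropy U = k"
    by (simp_all add: U_def set_pmf_of_set lessThan_empty_iff shannon_entropy_pmf_of_set)
  define q where "q = pair_pmf (bernoulli_pmf t) U"
  have fin: "finite (set_pmf q)"
    using U by (simp add: q_def)
  have "shannon_entropy q = l"
    using t U by (simp add: q_def shannon_entropy_pair_pmf shannon_entropy_bernoulli_pmf)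
  then show ?thesis
    using fin by (intro that[of "map_pmf to_nat q"]) (simp_all add: shannon_entropy_map_pmf_inj_on)
qed

definition pair_triple_pmf ::
    "(nat \<times> nat \<times> nat) pmf \<Rightarrow> (nat \<times> nat \<times> nat) pmf \<Rightarrow> (nat \<times> nat \<times> nat) pmf" where
  "pair_triple_pmf p q = map_pmf
     (\<lambda>((x1, x2, x3), (y1, y2, y3)). (to_nat (x1, y1), to_nat (x2, y2), to_nat (x3, y3)))
     (pair_pmf p q)"

lemma finite_set_pair_triple_pmf [simp]:
  "finite (set_pmf p) \<Longrightarrow> finite (set_pmf q) \<Longrightarrow> finite (set_pmf (pair_triple_pmf p q))"
  by (simp add: pair_triple_pmf_def)

lemma entropy_vector_pair_triple_pmf:
  assumes p: "finite (set_pmf p)" and q: "finite (set_pmf q)"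
  shows "entropy_vector (pair_triple_pmf p q) = entropy_vector p + entropy_vector q"
proof -
  have marginal: "shannon_entropy (map_pmf \<pi> (pair_triple_pmf p q)) =
      shannon_entropy (map_pmf \<pi> p) + shannon_entropy (map_pmf \<pi> q)"
    if "inj f" "\<And>x1 x2 x3 y1 y2 y3.
      \<pi> (to_nat (x1, y1), to_nat (x2, y2), to_nat (x3, y3)) = f (\<pi> (x1, x2, x3), \<pi> (y1, y2, y3))"
    for \<pi> :: "nat \<times> nat \<times> nat \<Rightarrow> 'b" and f :: "'b \<times> 'b \<Rightarrow> 'b"
  proof -
    have "map_pmf \<pi> (pair_triple_pmf p q) = map_pmf (\<lambda>(x, y). f (\<pi> x, \<pi> y)) (pair_pmf p q)"
      unfolding pair_triple_pmf_def map_pmf_comp by (intro map_pmf_cong) (auto simp: that(2))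
    then show ?thesis
      using shannon_entropy_map_pair_pmf[OF that(1) p q] by simp
  qed
  have inj1: "inj (to_nat :: nat \<times> nat \<Rightarrow> nat)"
    by simp
  have inj2: "inj (\<lambda>((x1, x2), (y1, y2)). (to_nat (x1 :: nat, y1 :: nat) :: nat, to_nat (x2 :: nat, y2 :: nat) :: nat))"
    by (auto simp: inj_def)
  have inj3: "inj (\<lambda>((x1, x2, x3), (y1, y2, y3)).
      (to_nat (x1 :: nat, y1 :: nat) :: nat, to_nat (x2 :: nat, y2 :: nat) :: nat, to_nat (x3 :: nat, y3 :: nat) :: nat))"
    by (auto simp: inj_def)
  have "shannon_entropy (map_pmf (\<lambda>(x, y, z). x) (pair_triple_pmf p q)) =
      shannon_entropy (map_pmf (\<lambda>(x, y, z). x) p) + shannon_entropy (map_pmf (\<lambda>(x, y, z). x) q)"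
       "shannon_entropy (map_pmf (\<lambda>(x, y, z). y) (pair_triple_pmf p q)) =
      shannon_entropy (map_pmf (\<lambda>(x, y, z). y) p) + shannon_entropy (map_pmf (\<lambda>(x, y, z). y) q)"
       "shannon_entropy (map_pmf (\<lambda>(x, y, z). z) (pair_triple_pmf p q)) =
      shannon_entropy (map_pmf (\<lambda>(x, y, z). z) p) + shannon_entropy (map_pmf (\<lambda>(x, y, z). z) q)"
    by (rule marginal[OF inj1]; simp)+
  moreover have "shannon_entropy (map_pmf (\<lambda>(x, y, z). (x, y)) (pair_triple_pmf p q)) =
      shannon_entropy (map_pmf (\<lambda>(x, y, z). (x, y)) p) + shannon_entropy (map_pmf (\<lambda>(x, y, z). (x, y)) q)"
       "shannon_entropy (map_pmf (\<lambda>(x, y, z). (x, z)) (pair_triple_pmf p q)) =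
      shannon_entropy (map_pmf (\<lambda>(x, y, z). (x, z)) p) + shannon_entropy (map_pmf (\<lambda>(x, y, z). (x, z)) q)"
       "shannon_entropy (map_pmf (\<lambda>(x, y, z). (y, z)) (pair_triple_pmf p q)) =
      shannon_entropy (map_pmf (\<lambda>(x, y, z). (y, z)) p) + shannon_entropy (map_pmf (\<lambda>(x, y, z). (y, z)) q)"
    by (rule marginal[OF inj2]; simp add: split_beta)+
  moreover have "shannon_entropy (pair_triple_pmf p q) = shannon_entropy p + shannon_entropy q"
    using marginal[OF inj3, of id] by (simp add: split_beta)
  ultimately show ?thesis
    unfolding entropy_vector_def by (simp add: vec_eq_iff vector_def)
qed

lemma entropy_vector_single_coordinate:
  assumes "finite (set_pmf p)"
  shows "entropy_vector (map_pmf (\<lambda>x. (x, 0, 0)) p) = shannon_entropy p *\<^sub>R e1"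
    and "entropy_vector (map_pmf (\<lambda>x. (0, x, 0)) p) = shannon_entropy p *\<^sub>R e2"
    and "entropy_vector (map_pmf (\<lambda>x. (0, 0, x)) p) = shannon_entropy p *\<^sub>R e3"
  using assms
  by (simp_all add: entropy_vector_def map_pmf_comp shannon_entropy_map_pmf_inj_on inj_on_def
      e1_def e2_def e3_def vec_eq_iff vector_def)

lemma pair_pmf_of_set:
  assumes "finite A" "A \<noteq> {}" "finite B" "B \<noteq> {}"
  shows "pair_pmf (pmf_of_set A) (pmf_of_set B) = pmf_of_set (A \<times> B)"
proof (rule pmf_eqI)
  fix x :: "'a \<times> 'b"
  show "pmf (pair_pmf (pmf_of_set A) (pmf_of_set B)) x = pmf (pmf_of_set (A \<times> B)) x"
    using assms by (cases x) (simp add: pmf_pair indicator_def card_cartesian_product)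
qed

lemma mod_add_left_cancel_less:
  fixes a b c m :: nat
  assumes "(a + b) mod m = (a + c) mod m" "b < m" "c < m"
  shows "b = c"
proof -
  have "int ((a + b) mod m) = int ((a + c) mod m)"
    using assms(1) by simp
  then have "(int a + int b) mod int m = (int a + int c) mod int m"
    by (simp add: of_nat_mod)
  then have "((int a + int b) - int a) mod int m = ((int a + int c) - int a) mod int m"
    by (rule mod_diff_cong) simp
  then show ?thesis
    using assms(2,3) by simp
qed

lemma shear_inj_on: "inj_on (\<lambda>(a, b). (a, (a + b) mod m)) ({..<m} \<times> {..<m :: nat})"
  by (auto simp: inj_on_def dest: mod_add_left_cancel_less)

lemma map_pmf_mod_sum_pmf_of_set:
  fixes m :: nat
  assumes "0 < m"
  shows "map_pmf (\<lambda>(a, b). (a + b) mod m) (pmf_of_set ({..<m} \<times> {..<m})) = pmf_of_set {..<m}"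
proof -
  let ?M = "{..<m}"
  have shear: "map_pmf (\<lambda>(a, b). (a, (a + b) mod m)) (pmf_of_set (?M \<times> ?M)) = pmf_of_set (?M \<times> ?M)"
    using shear_inj_on[of m] assms
    by (simp add: map_pmf_of_set_inj endo_inj_surj subset_eq lessThan_empty_iff)
  have "map_pmf (\<lambda>(a, b). (a + b) mod m) (pmf_of_set (?M \<times> ?M)) =
      map_pmf snd (map_pmf (\<lambda>(a, b). (a, (a + b) mod m)) (pmf_of_set (?M \<times> ?M)))"
    by (simp add: map_pmf_comp split_def)
  also have "\<dots> = map_pmf snd (pair_pmf (pmf_of_set ?M) (pmf_of_set ?M))"
    using assms by (simp add: shear pair_pmf_of_set lessThan_empty_iff)
  also have "\<dots> = pmf_of_set ?M"
    by (rule map_snd_pair_pmf)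
  finally show ?thesis .
qed

definition mod_sum_pmf :: "nat \<Rightarrow> (nat \<times> nat \<times> nat) pmf" where
  "mod_sum_pmf m = map_pmf (\<lambda>(a, b). (a, b, (a + b) mod m)) (pmf_of_set ({..<m} \<times> {..<m}))"

lemma finite_set_mod_sum_pmf [simp]: "0 < m \<Longrightarrow> finite (set_pmf (mod_sum_pmf m))"
  by (simp add: mod_sum_pmf_def set_pmf_of_set lessThan_empty_iff)

lemma entropy_vector_mod_sum_pmf:
  assumes "0 < m"
  shows "entropy_vector (mod_sum_pmf m) = log 2 m *\<^sub>R e123'"
proof -
  define M where "M = {..<m}"
  have M: "finite M" "M \<noteq> {}"
    using assms by (auto simp: M_def)
  define U where "U = pmf_of_set M"
  have U: "shannon_entropy U = log 2 m"
    using M by (simp add: U_def shannon_entropy_pmf_of_set M_def)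
  have UU: "pmf_of_set (M \<times> M) = pair_pmf U U"
    using M by (simp add: U_def pair_pmf_of_set)
  have marginal: "map_pmf \<pi> (mod_sum_pmf m) = map_pmf (\<lambda>(a, b). \<pi> (a, b, (a + b) mod m)) (pmf_of_set (M \<times> M))"
    for \<pi> :: "nat \<times> nat \<times> nat \<Rightarrow> 'b"
    by (simp add: mod_sum_pmf_def map_pmf_comp M_def split_def)
  have entropy_inj_image: "shannon_entropy (map_pmf f (pmf_of_set (M \<times> M))) = 2 * log 2 m"
    if "inj_on f (M \<times> M)" for f :: "nat \<times> nat \<Rightarrow> 'b"
    using that M assms
    by (simp add: shannon_entropy_map_pmf_inj_on shannon_entropy_pmf_of_set card_cartesian_product log_mult M_def)
  have swap_shear_inj: "inj_on (\<lambda>(a, b). (b, (a + b) mod m)) (M \<times> M)"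
    by (auto simp: inj_on_def M_def) (metis add.commute mod_add_left_cancel_less)
  have "shannon_entropy (map_pmf (\<lambda>(x, y, z). x) (mod_sum_pmf m)) = log 2 m"
       "shannon_entropy (map_pmf (\<lambda>(x, y, z). y) (mod_sum_pmf m)) = log 2 m"
    by (simp_all add: marginal UU map_fst_pair_pmf map_snd_pair_pmf U split_def)
  moreover have "shannon_entropy (map_pmf (\<lambda>(x, y, z). z) (mod_sum_pmf m)) = log 2 m"
    using map_pmf_mod_sum_pmf_of_set[OF assms, folded M_def, folded U_def] by (simp add: marginal U)
  moreover have "shannon_entropy (map_pmf (\<lambda>(x, y, z). (x, y)) (mod_sum_pmf m)) = 2 * log 2 m"
    using entropy_inj_image[of "\<lambda>x. x"] by (simp add: marginal split_def)
  moreover have "shannon_entropy (map_pmf (\<lambda>(x, y, z). (x, z)) (mod_sum_pmf m)) = 2 * log 2 m"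
    using shear_inj_on[of m, folded M_def] by (simp add: marginal entropy_inj_image)
  moreover have "shannon_entropy (map_pmf (\<lambda>(x, y, z). (y, z)) (mod_sum_pmf m)) = 2 * log 2 m"
    using swap_shear_inj by (simp add: marginal entropy_inj_image)
  moreover have "shannon_entropy (mod_sum_pmf m) = 2 * log 2 m"
    unfolding mod_sum_pmf_def M_def[symmetric] by (rule entropy_inj_image) (auto simp: inj_on_def)
  ultimately show ?thesis
    by (simp add: entropy_vector_def e123'_def vec_eq_iff vector_def)
qed

theorem corollary1:
  shows "Theta_in \<subseteq> Theta \<inter> Gamma3_star"
proof
  fix v assume "v \<in> Theta_in"
  then obtain l1 l2 l3 and m :: nat
    where v: "v = l1 *\<^sub>R e1 + l2 *\<^sub>R e2 + l3 *\<^sub>R e3 + log 2 m *\<^sub>R e123'"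
      and l: "0 \<le> l1" "0 \<le> l2" "0 \<le> l3" and m: "0 < m"
    by (auto simp: Theta_in_def)
  have "v \<in> Theta"
    using l m unfolding v Theta_def by fastforce
  obtain p1 p2 p3 :: "nat pmf"
    where p: "finite (set_pmf p1)" "finite (set_pmf p2)" "finite (set_pmf p3)"
      and H: "shannon_entropy p1 = l1" "shannon_entropy p2 = l2" "shannon_entropy p3 = l3"
    using shannon_entropy_attains l by metis
  define q where "q = pair_triple_pmf
    (pair_triple_pmf (map_pmf (\<lambda>x. (x, 0, 0)) p1) (map_pmf (\<lambda>x. (0, x, 0)) p2))
    (pair_triple_pmf (map_pmf (\<lambda>x. (0, 0, x)) p3) (mod_sum_pmf m))"
  have "finite (set_pmf q)"
    using p m by (simp add: q_def)
  moreover have "entropy_vector q = v"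
    using p m by (simp add: q_def v H entropy_vector_pair_triple_pmf entropy_vector_single_coordinate
        entropy_vector_mod_sum_pmf add.assoc)
  ultimately have "v \<in> Gamma3_star"
    unfolding Gamma3_star_def using all_finite_entropy_if_finite_support by blast
  with \<open>v \<in> Theta\<close> show "v \<in> Theta \<inter> Gamma3_star" ..
qed

end
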